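(* Let $L,D\subseteq\Sigma^\omega$ be such that $D$ has trivial right-congruence. Then $\sim_{L,D}$ is a right-congruence on $\Sigma^*$.
   Context: For $L\subseteq\Sigma^\omega$, the canonical right-congruence $\sim_L$ on $\Sigma^*$ is given by $u\sim_L v$ iff for all $\alpha\in\Sigma^\omega$: $u\alpha\in L\iff v\alpha\in L$. $D$ has trivial right-congruence if $\sim_D$ has exactly one equivalence class. For $w,w'\in\Sigma^*$, $w\sim_{L,D}w'$ iff for all $\alpha\in\Sigma^\omega\setminus D$: $w\alpha\in L\iff w'\alpha\in L$. A right-congruence is an equivalence relation $\sim$ on $\Sigma^*$ such that $u\sim v$ implies $u\sigma\sim v\sigma$ for all $\sigma\in\Sigma$. *)

theory Defs
  imports "HOL-Library.Omega_Words_Fun"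
begin

text \<open>The alphabet Sigma is the (arbitrary) type 'a; finite words = all lists,
infinite words = all functions nat => 'a.\<close>

definition canon_rc :: "'a word set \<Rightarrow> ('a list \<times> 'a list) set" where
  "canon_rc L = {(u, v). \<forall>\<alpha>. (u \<frown> \<alpha> \<in> L) \<longleftrightarrow> (v \<frown> \<alpha> \<in> L)}"

definition trivial_rc :: "'a word set \<Rightarrow> bool" where
  "trivial_rc D \<longleftrightarrow> card (UNIV // canon_rc D) = 1"

definition rel_LD :: "'a word set \<Rightarrow> 'a word set \<Rightarrow> ('a list \<times> 'a list) set" where
  "rel_LD L D = {(w, w'). \<forall>\<alpha>. \<alpha> \<notin> D \<longrightarrow> ((w \<frown> \<alpha> \<in> L) \<longleftrightarrow> (w' \<frown> \<alpha> \<in> L))}"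

definition right_congruence :: "('a list \<times> 'a list) set \<Rightarrow> bool" where
  "right_congruence R \<longleftrightarrow> equiv UNIV R \<and>
     (\<forall>u v \<sigma>. (u, v) \<in> R \<longrightarrow> (u @ [\<sigma>], v @ [\<sigma>]) \<in> R)"

end

theory Submission
  imports Defs
begin

text \<open>If \<open>\<sim>\<^sub>D\<close> has a single class, then \<open>u \<frown> \<alpha> \<in> D \<longleftrightarrow> \<alpha> \<in> D\<close> for every finite \<open>u\<close>
(compare \<open>u\<close> with the empty word). Hence the complement of \<open>D\<close> is closed under
prepending letters, so a test word \<open>\<alpha> \<notin> D\<close> for \<open>u\<sigma>, v\<sigma>\<close> yields the test word
\<open>\<sigma>\<alpha> \<notin> D\<close> for \<open>u, v\<close>.\<close>

lemma equiv_canon_rc: "equiv UNIV (canon_rc L)"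
  unfolding canon_rc_def by (auto intro!: equivI refl_onI symI transI)

lemma equiv_rel_LD: "equiv UNIV (rel_LD L D)"
  unfolding rel_LD_def by (auto intro!: equivI refl_onI symI transI)

lemma trivial_rc_iff: "trivial_rc D \<longleftrightarrow> canon_rc D = UNIV"
proof
  assume "trivial_rc D"
  then obtain X where X: "UNIV // canon_rc D = {X}"
    unfolding trivial_rc_def by (metis card_1_singletonE)
  have "(u, v) \<in> canon_rc D" for u v
  proof -
    have "canon_rc D `` {u} = canon_rc D `` {v}"
      using X quotientI[of u UNIV "canon_rc D"] quotientI[of v UNIV "canon_rc D"] by auto
    then show ?thesis
      using eq_equiv_class_iff[OF equiv_canon_rc] by blast
  qed
  then show "canon_rc D = UNIV" by auto
next
  assume "canon_rc D = UNIV"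
  then have "UNIV // canon_rc D = {UNIV}"
    by (auto simp: quotient_def)
  then show "trivial_rc D"
    unfolding trivial_rc_def by simp
qed

lemma trivial_rc_conc_iff:
  assumes "trivial_rc D"
  shows "u \<frown> \<alpha> \<in> D \<longleftrightarrow> \<alpha> \<in> D"
proof -
  have "(u, []) \<in> canon_rc D"
    using assms by (simp add: trivial_rc_iff)
  then show ?thesis
    unfolding canon_rc_def by auto
qed

lemma rel_LD_append:
  assumes "(u, v) \<in> rel_LD L D"
    and "\<And>\<alpha>. \<alpha> \<notin> D \<Longrightarrow> x \<frown> \<alpha> \<notin> D"
  shows "(u @ x, v @ x) \<in> rel_LD L D"
  unfolding rel_LD_def
proof (clarify)
  fix \<alpha> assume "\<alpha> \<notin> D"
  then have "u \<frown> (x \<frown> \<alpha>) \<in> L \<longleftrightarrow> v \<frown> (x \<frown> \<alpha>) \<in> L"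
    using assms unfolding rel_LD_def by blast
  then show "(u @ x) \<frown> \<alpha> \<in> L \<longleftrightarrow> (v @ x) \<frown> \<alpha> \<in> L"
    by simp
qed

theorem proposition1:
  fixes L D :: "'a word set"
  assumes "trivial_rc D"
  shows "right_congruence (rel_LD L D)"
  unfolding right_congruence_def
proof (intro conjI allI impI equiv_rel_LD)
  fix u v \<sigma>
  assume "(u, v) \<in> rel_LD L D"
  then show "(u @ [\<sigma>], v @ [\<sigma>]) \<in> rel_LD L D"
    by (rule rel_LD_append) (use trivial_rc_conc_iff[OF assms] in blast)
qed

end
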